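(* In the setting of the context, let $(L,\nabla)\in\mathrm{Conn}(\tilde X)$, let $(L_u,\nabla,L_0)=(L\otimes_{\mathbb{C}[[z]]}\mathbb{C}((z)),\nabla,L/\lambda L)\in\mathrm{CC}(\tilde X)$ be its image, and let $(l_u,\delta,l_0)\in\widetilde{\mathrm{CC}}(\tilde X)$ be the object corresponding to $(L_u,\nabla,L_0)$ under the equivalence $\Psi$. Then $(l_u,\delta,l_0)$ is isomorphic to the image of some object of $\widetilde{\mathrm{Conn}}(\tilde X)$ under the functor $\widetilde{\mathrm{Conn}}(\tilde X)\to\widetilde{\mathrm{CC}}(\tilde X)$.
   Context: Let $t(z),d(z)\in\mathbb{C}[[z]]$ with $t^2-4d$ having a simple zero at $z=0$; $\tilde X=\operatorname{Spf}\mathbb{C}[[\tilde z]]$ is the spectral curve $\xi^2-t\xi+d=0$ in $T^*\operatorname{Spf}\mathbb{C}[[z]]=\operatorname{Spf}\mathbb{C}[\xi][[z]]$, $\tilde z=\sqrt{t^2-4d}$, $\mu=\xi\,dz|_{\tilde X}$. A $\lambda$-connection on a module $M$ is a $\mathbb{C}[[\lambda]]$-linear $\nabla:M\to M\otimes\Omega$ with $\nabla(fs)=f\nabla s+\lambda s\,df$. $\mathrm{Conn}(\tilde X)$: pairs $(L,\nabla)$ with $L$ free of rank 2 over $\mathbb{C}[[z,\lambda]]$ and $\nabla:L\to L\,dz$ a $\lambda$-connection whose reduction $\nabla_0$ satisfies $\operatorname{tr}\nabla_0=t\,dz$, $\det\nabla_0=d\,(dz)^2$. $\mathrm{CC}(\tilde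 X)$: triples $(L_u,\nabla,L_0)$ with $L_u$ free of rank 2 over $\mathbb{C}((z))[[\lambda]]$, $\nabla$ a $\lambda$-connection with the same trace/determinant condition on $\nabla_0$, and $L_0\subset L_u/\lambda L_u$ a $\mathbb{C}[[z]]$-lattice stable under $\nabla_0$. $\widetilde{\mathrm{Conn}}(\tilde X)$: pairs $(l,\delta)$, $l$ free of rank 1 over $\mathbb{C}[[\tilde z,\lambda]]$, $\delta:l\to\tilde z^{-1}l\,d\tilde z$ a $\lambda$-connection with residue $-\lambda/2$ and reduction mod $\lambda$ equal to $\mu$. $\widetilde{\mathrm{CC}}(\tilde X)$: triples $(l_u,\delta,l_0)$, $l_u$ free of rank 1 over $\mathbb{C}((\tilde z))[[\lambda]]$, $\delta:l_u\to l_u\,d\tilde z$ a $\lambda$-connection with reduction mod $\lambda$ equal to $\mu$, $l_0$ a $\mathbb{C}[[\tilde z]]$-lattice in $l_u/\lambda l_u$. Morphisms are isomorphisms compatible with all structure. The functor $\widetilde{\mathrm{Conn}}\to\widetilde{\mathrm{CC}}$ sends $(l,\delta)\mapsto(l\otimes\mathbb{C}((\tilde z)),\delta,l/\lambda l)$. The equivalence $\Psi:\widetilde{\mathrm{CC}}(\tilde X)\to\mathrm{CC}(\tilde X)$ regards $(l_u,\delta,l_0)$ as a triple over $\mathbb{C}[[z]]\subset\mathbb{C}[[\tilde z]]$, using $l_u\,dz=l_u\,d\tilde z$. *)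

theory Defs
  imports "HOL-Computational_Algebra.Formal_Laurent_Series"
begin

(* C[[z]], C[[zt]]      : complex fps   (zt stands for the coordinate \tilde z)
   C((z)), C((zt))      : complex fls
   C[[z,lambda]]        : complex fps fps  (outer variable lambda, coefficients in C[[z]])
   C((z))[[lambda]], C((zt))[[lambda]] : complex fls fps (outer variable lambda)
   Free modules are written in a basis: rank 2 = pairs, rank 1 = the ring itself. *)

type_synonym 'a mat2 = "('a \<times> 'a) \<times> ('a \<times> 'a)"

definition m11 :: "'a mat2 \<Rightarrow> 'a" where "m11 A = fst (fst A)"
definition m12 :: "'a mat2 \<Rightarrow> 'a" where "m12 A = snd (fst A)"
definition m21 :: "'a mat2 \<Rightarrow> 'a" where "m21 A = fst (snd A)"
definition m22 :: "'a mat2 \<Rightarrow> 'a" where "m22 A = snd (snd A)"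

definition mmap :: "('a \<Rightarrow> 'b) \<Rightarrow> 'a mat2 \<Rightarrow> 'b mat2" where
  "mmap f A = ((f (m11 A), f (m12 A)), (f (m21 A), f (m22 A)))"

abbreviation lam :: "complex fls fps" where "lam \<equiv> fps_X"

definition dsp :: "complex fls fps \<Rightarrow> complex fls fps" where
  "dsp f = Abs_fps (\<lambda>n. fls_deriv (f $ n))"

definition embL :: "complex fps fps \<Rightarrow> complex fls fps" where
  "embL f = Abs_fps (\<lambda>n. fps_to_fls (f $ n))"

(* the coordinate z as a power series in zt = sqrt(t^2-4d):  (t^2-4d)(zser) = zt^2 *)
definition zser :: "complex fps \<Rightarrow> complex fps \<Rightarrow> complex fps" where
  "zser t d = fps_inv (t\<^sup>2 - 4 * d) oo fps_X\<^sup>2"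

definition incl :: "complex fps \<Rightarrow> complex fps \<Rightarrow> complex fps \<Rightarrow> complex fps" where
  "incl t d f = f oo zser t d"

definition inclL :: "complex fps \<Rightarrow> complex fps \<Rightarrow> complex fls \<Rightarrow> complex fls" where
  "inclL t d x = fps_to_fls (incl t d (fls_base_factor_to_fps x))
                 * (fps_to_fls (zser t d)) powi (fls_subdegree x)"

definition inclU :: "complex fps \<Rightarrow> complex fps \<Rightarrow> complex fls fps \<Rightarrow> complex fls fps" where
  "inclU t d f = Abs_fps (\<lambda>n. inclL t d (f $ n))"

definition dzdzt :: "complex fps \<Rightarrow> complex fps \<Rightarrow> complex fls fps" where
  "dzdzt t d = fps_const (fps_to_fls (fps_deriv (zser t d)))"

(* mu = xi dz restricted to the spectral curve, as coefficient of d zt;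
   on the curve xi = (t + zt)/2 since zt = 2 xi - t *)
definition mu :: "complex fps \<Rightarrow> complex fps \<Rightarrow> complex fls" where
  "mu t d = fps_to_fls (fps_const (1/2) * (incl t d t + fps_X) * fps_deriv (zser t d))"

(* rank 2 lambda-connection on C((z))[[lambda]]^2 with matrix A (coefficient of dz) *)
definition nabla :: "complex fls fps mat2 \<Rightarrow> complex fls fps \<times> complex fls fps
                      \<Rightarrow> complex fls fps \<times> complex fls fps" where
  "nabla A s = (lam * dsp (fst s) + m11 A * fst s + m12 A * snd s,
                lam * dsp (snd s) + m21 A * fst s + m22 A * snd s)"

(* rank 1 lambda-connection on C((zt))[[lambda]] with coefficient a (of d zt) *)
definition tdelta :: "complex fls fps \<Rightarrow> complex fls fps \<Rightarrow> complex fls fps" where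
  "tdelta a g = lam * dsp g + a * g"

definition lattice2 :: "(complex fls \<times> complex fls) set \<Rightarrow> bool" where
  "lattice2 S \<longleftrightarrow> (\<exists>b1 b2 :: complex fls \<times> complex fls.
      fst b1 * snd b2 - snd b1 * fst b2 \<noteq> 0 \<and>
      S = {(fps_to_fls f1 * fst b1 + fps_to_fls f2 * fst b2,
            fps_to_fls f1 * snd b1 + fps_to_fls f2 * snd b2) | f1 f2. True})"

definition lattice1 :: "complex fls set \<Rightarrow> bool" where
  "lattice1 S \<longleftrightarrow> (\<exists>b :: complex fls. b \<noteq> 0 \<and> S = {fps_to_fls f * b | f. True})"

(* objects of Conn(X~): connection matrix A over C[[z,lambda]] in a basis of L *)
definition is_Conn :: "complex fps \<Rightarrow> complex fps \<Rightarrow> complex fps fps mat2 \<Rightarrow> bool" where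
  "is_Conn t d A \<longleftrightarrow>
     m11 A $ 0 + m22 A $ 0 = t \<and> m11 A $ 0 * m22 A $ 0 - m12 A $ 0 * m21 A $ 0 = d"

(* its image in CC(X~): (L (x) C((z)), nabla, L/lambda L = C[[z]]^2) *)
definition conn_to_cc :: "complex fps fps mat2 \<Rightarrow> complex fls fps mat2 \<times> (complex fls \<times> complex fls) set" where
  "conn_to_cc A = (mmap embL A, {(fps_to_fls f1, fps_to_fls f2) | f1 f2. True})"

definition is_tCC :: "complex fps \<Rightarrow> complex fps \<Rightarrow> complex fls fps \<Rightarrow> complex fls set \<Rightarrow> bool" where
  "is_tCC t d a l0 \<longleftrightarrow> a $ 0 = mu t d \<and> lattice1 l0"

(* objects of Conn~(X~): delta(e) = a e d zt with a \<in> zt^-1 C[[zt,lambda]],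
   residue -lambda/2, reduction mu *)
definition is_tConn :: "complex fps \<Rightarrow> complex fps \<Rightarrow> complex fls fps \<Rightarrow> bool" where
  "is_tConn t d b \<longleftrightarrow>
     (\<forall>n. \<forall>k < -1. fls_nth (b $ n) k = 0) \<and>
     (\<forall>n. fls_nth (b $ n) (-1) = (if n = 1 then - 1/2 else 0)) \<and>
     b $ 0 = mu t d"

definition tconn_to_tcc :: "complex fls fps \<Rightarrow> complex fls fps \<times> complex fls set" where
  "tconn_to_tcc b = (b, {fps_to_fls f | f. True})"

(* isomorphisms in CC~(X~): multiplication by a unit of C((zt))[[lambda]] *)
definition tCC_iso :: "complex fls fps \<times> complex fls set \<Rightarrow> complex fls fps \<times> complex fls set \<Rightarrow> bool" where
  "tCC_iso X Y \<longleftrightarrow> (\<exists>u. u $ 0 \<noteq> 0 \<and>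
      (\<forall>g. tdelta (fst Y) (u * g) = u * tdelta (fst X) g) \<and>
      (\<lambda>x. u $ 0 * x) ` snd X = snd Y)"

(* Psi(a,l0) is isomorphic in CC(X~) to (A,L0): there is a C((z))[[lambda]]-linear
   bijection Phi : C((z))[[lambda]]^2 -> C((zt))[[lambda]] (determined by the images
   p1, p2 of the basis vectors) compatible with the connections (using dz = (dz/dzt) dzt)
   and mapping L0 onto l0 modulo lambda *)
definition Psi_iso :: "complex fps \<Rightarrow> complex fps \<Rightarrow> complex fls fps \<times> complex fls set
                       \<Rightarrow> complex fls fps mat2 \<times> (complex fls \<times> complex fls) set \<Rightarrow> bool" where
  "Psi_iso t d X Y \<longleftrightarrow> (\<exists>p1 p2.
      let Phi = (\<lambda>s. inclU t d (fst s) * p1 + inclU t d (snd s) * p2);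
          Phi0 = (\<lambda>v. inclL t d (fst v) * p1 $ 0 + inclL t d (snd v) * p2 $ 0)
      in bij Phi \<and>
         (\<forall>s. tdelta (fst X) (Phi s) = dzdzt t d * Phi (nabla (fst Y) s)) \<and>
         Phi0 ` snd Y = snd X)"

end

theory Submission
  imports Defs
begin

(* Let p1, p2 be the images in C((zt))[[lambda]] of the basis of L, so that
   lambda p_j' + a p_j = (dz/dzt) (alpha_1j p1 + alpha_2j p2), and let sigma be the deck involution
   zt -> -zt, which fixes C((z)) and negates dz/dzt.  The determinant W = p1 sigma(p2) - p2 sigma(p1)
   satisfies lambda W' = ((dz/dzt) tr alpha - a + sigma a) W with W(0) invertible, so for n >= 2 the
   residue of a_n is half the residue of a lambda-logarithmic derivative, which is zero.
   Modulo lambda, p_j(0) = G_j c with c a generator of l0 and G1, G2 a C[[z]]-basis of C[[zt]];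
   hence G1 sigma(G2) - G2 sigma(G1) vanishes to order exactly one.  Eliminating p(1) from the
   lambda^1 part of the equations shows that (a_1 + c'/c) times this determinant is holomorphic,
   which gives a simple pole with residue -1/2.  Finally the gauge transformation
   u = c exp(- lambda integral (a_2 + a_3 lambda + ...) dzt) removes all coefficients of lambda^n,
   n >= 2, and turns a_1 into a_1 + c'/c. *)

notation fls_nth (infixl "$$" 75)

lemma dsp_nth [simp]: "dsp F $ n = fls_deriv (F $ n)"
  by (simp add: dsp_def)

lemma dsp_add [simp]: "dsp (F + G) = dsp F + dsp G"
  and dsp_diff [simp]: "dsp (F - G) = dsp F - dsp G"
  and dsp_zero [simp]: "dsp 0 = 0"
  and dsp_one [simp]: "dsp 1 = 0"
  and dsp_const [simp]: "dsp (fps_const c) = fps_const (fls_deriv c)"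
  by (simp_all add: fps_eq_iff fps_one_nth fps_X_def)

lemma dsp_mult [simp]: "dsp (F * G) = dsp F * G + F * dsp G"
  by (rule fps_ext) (simp add: fps_mult_nth fls_deriv_sum sum.distrib add.commute)

lemma dsp_fps_deriv: "dsp (fps_deriv F) = fps_deriv (dsp F)"
  by (simp add: fps_eq_iff fls_of_nat)

lemma fps_deriv_dsp_logderiv:
  assumes "W $ 0 \<noteq> 0"
  shows "fps_deriv (dsp W * inverse W) = dsp (fps_deriv W * inverse W)"
proof -
  have W_inv: "W * inverse W = 1"
    using assms by (rule inverse_mult_eq_1')
  have "inverse W * dsp (W * inverse W) = 0"
    using W_inv by simp
  then have "inverse W * dsp W * inverse W + (W * inverse W) * dsp (inverse W) = 0"
    by (simp add: algebra_simps)
  then have "dsp (inverse W) = - dsp W * inverse W * inverse W"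
    using W_inv by (simp add: algebra_simps add_eq_0_iff2)
  moreover have "fps_deriv (inverse W) = - fps_deriv W * (inverse W)\<^sup>2"
    using assms by (rule fps_inverse_deriv)
  ultimately show ?thesis
    by (simp add: dsp_fps_deriv power2_eq_square algebra_simps)
qed

lemma residue_dsp_logderiv:
  assumes "W $ 0 \<noteq> 0"
  shows "(dsp W * inverse W) $ Suc n $$ (-1) = 0"
proof -
  have "of_nat (Suc n) * (dsp W * inverse W) $ Suc n = fps_deriv (dsp W * inverse W) $ n"
    by (simp only: fps_deriv_nth Suc_eq_plus1)
  also have "\<dots> = fls_deriv ((fps_deriv W * inverse W) $ n)"
    unfolding fps_deriv_dsp_logderiv[OF assms] by (rule dsp_nth)
  finally have "of_nat (Suc n) * ((dsp W * inverse W) $ Suc n $$ (-1)) = 0"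
    by (metis fls_deriv_residue fls_mult_of_nat_nth)
  then show ?thesis
    by (metis of_nat_eq_0_iff mult_eq_0_iff nat.distinct(1))
qed

lemma dsp_exp_compose:
  assumes "K $ 0 = 0"
  shows "dsp (fps_exp 1 oo K) = (fps_exp 1 oo K) * dsp K"
proof -
  define V where "V = fps_exp 1 oo K"
  have V0: "V $ 0 \<noteq> 0"
    by (simp add: V_def)
  have V_inv: "V * inverse V = 1"
    using V0 by (rule inverse_mult_eq_1')
  have "fps_deriv V = V * fps_deriv K"
    using assms by (simp add: V_def fps_compose_deriv)
  then have "fps_deriv V * inverse V = fps_deriv K"
    using V_inv by (simp add: mult.commute mult.left_commute)
  then have "fps_deriv (dsp V * inverse V) = fps_deriv (dsp K)"
    unfolding fps_deriv_dsp_logderiv[OF V0] by (simp add: dsp_fps_deriv)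
  then have "dsp V * inverse V = fps_const ((dsp V * inverse V) $ 0 - dsp K $ 0) + dsp K"
    by (rule fps_deriv_eq_iff[THEN iffD1])
  moreover have "(dsp V * inverse V) $ 0 = dsp K $ 0"
    using assms by (simp add: V_def)
  ultimately have "dsp V * inverse V = dsp K"
    by simp
  then show ?thesis
    using V_inv unfolding V_def[symmetric] by (metis mult.assoc mult.commute mult_1_right)
qed

lemma tdelta_gauge:
  assumes "dsp u = u * h"
  shows "tdelta a (u * g) = u * tdelta (a + lam * h) g"
  using assms by (simp add: tdelta_def algebra_simps)

lemma gauge_away_higher_coeffs:
  fixes a :: "complex fls fps"
  assumes res: "\<And>n. n \<ge> 2 \<Longrightarrow> a $ n $$ (-1) = 0"
  obtains V H where "V $ 0 = 1" "dsp V = V * H" "H $ 0 = 0"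
    and "\<And>n. n \<ge> 2 \<Longrightarrow> a $ n + H $ (n - 1) = 0"
proof -
  define H where "H = Abs_fps (\<lambda>n. if n = 0 then 0 else - a $ Suc n)"
  define K where "K = Abs_fps (\<lambda>n. fls_integral (H $ n))"
  have "dsp K = H"
    by (rule fps_ext) (simp add: K_def H_def fls_deriv_fls_integral res)
  moreover have "K $ 0 = 0"
    by (simp add: K_def H_def)
  ultimately have "dsp (fps_exp 1 oo K) = (fps_exp 1 oo K) * H"
    using dsp_exp_compose by metis
  with \<open>K $ 0 = 0\<close> show thesis
    by (intro that[of "fps_exp 1 oo K" H]) (simp_all add: H_def)
qed

definition sigma :: "'a::field fls \<Rightarrow> 'a fls" where
  "sigma x = fls_compose_fps x (- fps_X)"

definition sigmaU :: "'a::field fls fps \<Rightarrow> 'a fls fps" where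
  "sigmaU F = Abs_fps (\<lambda>n. sigma (F $ n))"

lemma sigma_nth: "sigma x $$ n = (-1) powi n * x $$ n"
proof -
  have "sigma x = fls_compose_fps x (fps_const (-1) * fps_X)"
    by (simp add: sigma_def flip: fps_const_neg)
  then show ?thesis
    using fls_nth_fls_compose_fps_linear[of "-1" x n] by (simp only: mult.commute) simp
qed

lemma sigma_mult [simp]: "sigma (x * y) = sigma x * sigma y"
  and sigma_add [simp]: "sigma (x + y) = sigma x + sigma y"
  and sigma_diff [simp]: "sigma (x - y) = sigma x - sigma y"
  and sigma_fps_to_fls [simp]: "sigma (fps_to_fls f) = fps_to_fls (f oo - fps_X)"
  and sigma_eq_0_iff [simp]: "sigma x = 0 \<longleftrightarrow> x = 0"
  by (simp_all add: sigma_def fls_compose_fps_mult fls_compose_fps_add fls_compose_fps_diff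
      fls_compose_fps_eq_0_iff)

lemma sigma_sum: "sigma (\<Sum>i\<in>A. f i) = (\<Sum>i\<in>A. sigma (f i))"
  by (induction A rule: infinite_finite_induct) simp_all

lemma sigma_deriv: "sigma (fls_deriv x) = - fls_deriv (sigma (x :: 'a::field_char_0 fls))"
  by (rule fls_eqI) (simp add: sigma_nth power_int_add)

lemma sigmaU_nth [simp]: "sigmaU F $ n = sigma (F $ n)"
  by (simp add: sigmaU_def)

lemma sigmaU_mult [simp]: "sigmaU (F * G) = sigmaU F * sigmaU G"
  and sigmaU_add [simp]: "sigmaU (F + G) = sigmaU F + sigmaU G"
  and sigmaU_const [simp]: "sigmaU (fps_const x) = fps_const (sigma x)"
  and sigmaU_lam [simp]: "sigmaU lam = lam"
  by (simp_all add: fps_eq_iff fps_mult_nth sigma_sum fps_X_def)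
    (simp_all add: sigma_def)

lemma sigmaU_dsp: "sigmaU (dsp F) = - dsp (sigmaU F)"
  by (simp add: fps_eq_iff sigma_deriv)

lemma fls_simple_pole:
  fixes f :: "'a::field fls"
  assumes eq: "f * fps_to_fls W = fps_to_fls R" and W0: "W $ 0 = 0" and W1: "W $ 1 \<noteq> 0"
  shows fls_simple_pole_order: "k < -1 \<Longrightarrow> f $$ k = 0"
    and fls_simple_pole_residue: "f $$ (-1) = R $ 0 / W $ 1"
proof -
  define U where "U = fps_shift 1 W"
  have U0: "U $ 0 \<noteq> 0"
    using W1 by (simp add: U_def)
  have "W = U * fps_X"
    using W0 by (intro fps_ext) (simp add: U_def)
  then have "(f * fls_X) * fps_to_fls U = fps_to_fls R"
    using eq by (simp add: fls_times_fps_to_fls mult_ac)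
  then have "(f * fls_X) * fps_to_fls (U * inverse U) = fps_to_fls (R * inverse U)"
    by (simp add: fls_times_fps_to_fls mult.assoc)
  then have fX: "f * fls_X = fps_to_fls (R * inverse U)"
    using U0 by (simp add: inverse_mult_eq_1')
  have "f $$ k = (if k + 1 < 0 then 0 else (R * inverse U) $ nat (k + 1))" for k
    using arg_cong[where f="\<lambda>x. x $$ (k + 1)", OF fX] by (simp add: fls_X_times_conv_shift(2))
  then show "k < -1 \<Longrightarrow> f $$ k = 0" and "f $$ (-1) = R $ 0 / W $ 1"
    by (simp_all add: U_def divide_inverse)
qed

definition fps_sigma_det :: "'a::comm_ring_1 fps \<Rightarrow> 'a fps \<Rightarrow> 'a fps" where
  "fps_sigma_det G1 G2 = G1 * (G2 oo - fps_X) - G2 * (G1 oo - fps_X)"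

lemma fps_sigma_det_0: "fps_sigma_det G1 G2 $ 0 = 0"
  by (simp add: fps_sigma_det_def)

lemma fps_sigma_det_1:
  "fps_sigma_det G1 G2 $ 1 = 2 * (fps_deriv G1 * (G2 oo - fps_X) - fps_deriv G2 * (G1 oo - fps_X)) $ 0"
  by (simp add: fps_sigma_det_def fps_compose_uminus' fps_mult_nth_1 algebra_simps)

lemma fps_sigma_det_basis:
  fixes E1 E2 E3 E4 G1 G2 :: "'a::field_char_0 fps"
  assumes even: "E1 oo - fps_X = E1" "E2 oo - fps_X = E2" "E3 oo - fps_X = E3" "E4 oo - fps_X = E4"
    and basis: "E1 * G1 + E2 * G2 = 1" "E3 * G1 + E4 * G2 = fps_X"
  shows "fps_sigma_det G1 G2 $ 1 \<noteq> 0"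
proof -
  have refl_0: "(- fps_X :: 'a fps) $ 0 = 0"
    by simp
  have reflected: "E1 * (G1 oo - fps_X) + E2 * (G2 oo - fps_X) = 1"
    "E3 * (G1 oo - fps_X) + E4 * (G2 oo - fps_X) = - fps_X"
    using basis[THEN arg_cong[where f="\<lambda>F. F oo - fps_X"]]
    by (simp_all add: fps_compose_add_distrib fps_compose_mult_distrib[OF refl_0] even)
  have "(E1 * E4 - E2 * E3) * fps_sigma_det G1 G2
      = (E1 * G1 + E2 * G2) * (E3 * (G1 oo - fps_X) + E4 * (G2 oo - fps_X))
        - (E3 * G1 + E4 * G2) * (E1 * (G1 oo - fps_X) + E2 * (G2 oo - fps_X))"
    unfolding fps_sigma_det_def by (simp add: algebra_simps)
  also have "\<dots> = - 2 * fps_X"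
    unfolding basis reflected by simp
  finally have "(E1 * E4 - E2 * E3) * fps_sigma_det G1 G2 = - 2 * fps_X" .
  then have "((E1 * E4 - E2 * E3) * fps_sigma_det G1 G2) $ 1 = - 2"
    by simp
  then have "(E1 * E4 - E2 * E3) $ 0 * fps_sigma_det G1 G2 $ 1 = - 2"
    by (simp only: fps_mult_nth_1 fps_sigma_det_0) simp
  then show ?thesis
    by auto
qed

lemma is_tConnI:
  assumes "b $ 0 = mu t d" and "\<And>k. k < -1 \<Longrightarrow> b $ 1 $$ k = 0" and "b $ 1 $$ (-1) = - 1 / 2"
    and "\<And>n. n \<ge> 2 \<Longrightarrow> b $ n = 0"
  shows "is_tConn t d b"
  unfolding is_tConn_def
proof (intro conjI allI impI)
  fix n :: nat and k :: int
  assume "k < -1"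
  consider "n = 0" | "n = 1" | "n \<ge> 2"
    by linarith
  then show "b $ n $$ k = 0"
    by cases (use assms \<open>k < -1\<close> in \<open>auto simp: mu_def\<close>)
next
  fix n :: nat
  consider "n = 0" | "n = 1" | "n \<ge> 2"
    by linarith
  then show "b $ n $$ (-1) = (if n = 1 then - 1 / 2 else 0)"
    by cases (use assms in \<open>auto simp: mu_def\<close>)
qed (fact assms(1))

lemma exists_tConn_gauge_equivalent:
  fixes a :: "complex fls fps" and c :: "complex fls"
  assumes a_0: "a $ 0 = mu t d" and c: "c \<noteq> 0"
    and res: "\<And>n. n \<ge> 2 \<Longrightarrow> a $ n $$ (-1) = 0"
    and pole: "\<And>k. k < -1 \<Longrightarrow> (a $ 1 + fls_deriv c / c) $$ k = 0"
    and residue: "(a $ 1 + fls_deriv c / c) $$ (-1) = - 1 / 2"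
  shows "\<exists>b. is_tConn t d b \<and> tCC_iso (tconn_to_tcc b) (a, {fps_to_fls f * c | f. True})"
proof -
  obtain V H where V0: "V $ 0 = 1" and dV: "dsp V = V * H" and H0: "H $ 0 = 0"
    and H: "\<And>n. n \<ge> 2 \<Longrightarrow> a $ n + H $ (n - 1) = 0"
    using gauge_away_higher_coeffs[OF res] by blast
  define h where "h = fps_const (fls_deriv c / c) + H"
  define u where "u = fps_const c * V"
  define b where "b = a + lam * h"
  have "dsp u = u * h"
    using c by (simp add: u_def h_def dV algebra_simps flip: fps_const_mult)
  then have "tdelta a (u * g) = u * tdelta b g" for g
    unfolding b_def by (rule tdelta_gauge)
  moreover have "u $ 0 = c"
    by (simp add: u_def V0)
  moreover have "(\<lambda>x. c * x) ` {fps_to_fls f | f. True} = {fps_to_fls f * c | f. True}"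
    by (force simp: mult.commute)
  moreover have "is_tConn t d b"
  proof (rule is_tConnI)
    show "b $ n = 0" if "n \<ge> 2" for n
      using H[OF that] that by (simp add: b_def h_def)
  qed (use a_0 pole residue in \<open>simp_all add: b_def h_def H0\<close>)
  ultimately show ?thesis
    unfolding tCC_iso_def tconn_to_tcc_def fst_conv snd_conv using c by metis
qed

lemma pair_det_equation:
  fixes L a fa J dp1 dp2 dq1 dq2 p1 p2 q1 q2 x11 x12 x21 x22 :: "'a::comm_ring_1"
  assumes e1: "L * dp1 + a * p1 = J * (x11 * p1 + x21 * p2)"
    and e2: "L * dp2 + a * p2 = J * (x12 * p1 + x22 * p2)"
    and f1: "- (L * dq1) + fa * q1 = - J * (x11 * q1 + x21 * q2)"
    and f2: "- (L * dq2) + fa * q2 = - J * (x12 * q1 + x22 * q2)"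
  shows "L * (dp1 * q2 + p1 * dq2 - dp2 * q1 - p2 * dq1)
    = (J * (x11 + x22) - a + fa) * (p1 * q2 - p2 * q1)"
proof -
  have "L * (dp1 * q2 + p1 * dq2 - dp2 * q1 - p2 * dq1)
      = (L * dp1 + a * p1) * q2 - p1 * (- (L * dq2) + fa * q2)
        - (L * dp2 + a * p2) * q1 + p2 * (- (L * dq1) + fa * q1)
        + (fa - a) * (p1 * q2 - p2 * q1)"
    by (simp add: algebra_simps)
  also have "\<dots> = (J * (x11 + x22) - a + fa) * (p1 * q2 - p2 * q1)"
    unfolding e1 e2 f1 f2 by (simp add: algebra_simps)
  finally show ?thesis .
qed

lemma first_order_elimination:
  fixes a0 a1 fa0 J P1 P2 fP1 fP2 Q1 Q2 dP1 dP2 x11 x12 x21 x22 y11 y12 y21 y22 :: "'a::comm_ring_1"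
  assumes e1: "dP1 + a0 * Q1 + a1 * P1 = J * (x11 * Q1 + y11 * P1 + x21 * Q2 + y21 * P2)"
    and e2: "dP2 + a0 * Q2 + a1 * P2 = J * (x12 * Q1 + y12 * P1 + x22 * Q2 + y22 * P2)"
    and f1: "fa0 * fP1 = - J * (x11 * fP1 + x21 * fP2)"
    and f2: "fa0 * fP2 = - J * (x12 * fP1 + x22 * fP2)"
    and trace: "a0 - fa0 = J * (x11 + x22)"
  shows "a1 * (P1 * fP2 - P2 * fP1)
    = J * ((y11 * P1 + y21 * P2) * fP2 - (y12 * P1 + y22 * P2) * fP1) - (dP1 * fP2 - dP2 * fP1)"
proof -
  have "a1 * (P1 * fP2 - P2 * fP1)
      = (dP1 + a0 * Q1 + a1 * P1) * fP2 - (dP2 + a0 * Q2 + a1 * P2) * fP1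
        - (dP1 * fP2 - dP2 * fP1) - Q1 * ((a0 - fa0) * fP2 + fa0 * fP2)
        + Q2 * ((a0 - fa0) * fP1 + fa0 * fP1)"
    by (simp add: algebra_simps)
  also have "\<dots> = J * ((y11 * P1 + y21 * P2) * fP2 - (y12 * P1 + y22 * P2) * fP1)
      - (dP1 * fP2 - dP2 * fP1)"
    unfolding e1 e2 f1 f2 trace by (simp add: algebra_simps)
  finally show ?thesis .
qed

lemma mmap_simps [simp]:
  "m11 (mmap f A) = f (m11 A)" "m12 (mmap f A) = f (m12 A)"
  "m21 (mmap f A) = f (m21 A)" "m22 (mmap f A) = f (m22 A)"
  by (simp_all add: mmap_def m11_def m12_def m21_def m22_def)

lemma embL_nth [simp]: "embL f $ n = fps_to_fls (f $ n)"
  by (simp add: embL_def)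

locale simply_branched =
  fixes t d :: "complex fps"
  assumes disc_linear_coeff: "(t\<^sup>2 - 4 * d) $ 1 \<noteq> 0"
begin

abbreviation Z :: "complex fps" where
  "Z \<equiv> zser t d"

definition J :: "complex fls" where
  "J = fps_to_fls (fps_deriv Z)"

lemma zser_0 [simp]: "Z $ 0 = 0"
  by (simp add: zser_def fps_inv_def)

lemma zser_nonzero [simp]: "Z \<noteq> 0"
proof -
  have "fps_inv (t\<^sup>2 - 4 * d) $ 1 \<noteq> 0"
    using disc_linear_coeff by (simp add: fps_inv_def)
  then have "fps_inv (t\<^sup>2 - 4 * d) \<noteq> 0"
    by auto
  then show ?thesis
    by (simp add: zser_def fps_compose_eq_0_iff)
qed

lemma compose_zser_even [simp]: "(f oo Z) oo - fps_X = f oo Z"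
proof -
  have "(fps_X :: complex fps) oo - fps_X = - fps_X"
    by simp
  then have "fps_X\<^sup>2 oo - fps_X = (fps_X\<^sup>2 :: complex fps)"
    by (simp flip: fps_compose_power)
  then have "Z oo - fps_X = Z"
    unfolding zser_def by (simp flip: fps_compose_assoc)
  then show ?thesis
    by (simp flip: fps_compose_assoc)
qed

lemma zser_even: "Z oo - fps_X = Z"
  using compose_zser_even[of fps_X] by simp

lemma deriv_zser_odd: "fps_deriv Z oo - fps_X = - fps_deriv Z"
proof -
  have "fps_deriv (Z oo - fps_X) = (fps_deriv Z oo - fps_X) * fps_deriv (- fps_X)"
    by (rule fps_compose_deriv) simp
  then have "fps_deriv Z = - (fps_deriv Z oo - fps_X)"
    by (simp add: zser_even)
  then show ?thesis
    by (metis minus_minus)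
qed

lemma sigma_J [simp]: "sigma J = - J"
  by (simp add: J_def deriv_zser_odd)

lemma deriv_zser_0: "fps_deriv Z $ 0 = 0"
proof -
  have "(Z oo - fps_X) $ 1 = - (Z $ 1)"
    by (simp add: fps_compose_uminus')
  then show ?thesis
    using zser_even by (simp add: fps_deriv_nth)
qed

lemma inclL_eq_compose: "inclL t d x = fls_compose_fps x Z"
  by (simp add: inclL_def incl_def fls_compose_fps_def)

lemma inclL_fps_to_fls [simp]: "inclL t d (fps_to_fls f) = fps_to_fls (f oo Z)"
  by (simp add: inclL_eq_compose)

lemma sigma_inclL [simp]: "sigma (inclL t d x) = inclL t d x"
  by (simp add: inclL_eq_compose sigma_def fls_compose_fps_assoc zser_even)

lemma inclU_nth [simp]: "inclU t d F $ n = inclL t d (F $ n)"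
  by (simp add: inclU_def)

lemma inclU_0 [simp]: "inclU t d 0 = 0"
  and inclU_1 [simp]: "inclU t d 1 = 1"
  by (simp_all add: fps_eq_iff inclL_eq_compose fps_one_nth)

lemma sigmaU_inclU [simp]: "sigmaU (inclU t d F) = inclU t d F"
  by (simp add: fps_eq_iff)

lemma dzdzt_eq: "dzdzt t d = fps_const J"
  by (simp add: dzdzt_def J_def)

lemma mu_minus_sigma_mu: "mu t d - sigma (mu t d) = J * fps_to_fls (t oo Z)"
proof -
  define M where "M = fps_const (1/2) * ((t oo Z) + fps_X) * fps_deriv Z"
  have refl_0: "(- fps_X :: complex fps) $ 0 = 0"
    by simp
  have "M oo - fps_X = fps_const (1/2) * ((t oo Z) - fps_X) * (- fps_deriv Z)"
    unfolding M_def
    by (simp add: fps_compose_mult_distrib[OF refl_0] fps_compose_add_distrib deriv_zser_odd)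
  then have "M - (M oo - fps_X) = fps_const (1/2) * 2 * (fps_deriv Z * (t oo Z))"
    by (simp add: M_def algebra_simps)
  also have "fps_const (1/2) * 2 = (1 :: complex fps)"
    by (simp only: numeral_fps_const fps_const_mult) simp
  finally have "M - (M oo - fps_X) = fps_deriv Z * (t oo Z)"
    by simp
  moreover have "mu t d = fps_to_fls M"
    by (simp add: mu_def M_def incl_def)
  ultimately show ?thesis
    by (simp add: J_def flip: fls_times_fps_to_fls fps_to_fls_minus)
qed

abbreviation liftU :: "complex fps fps \<Rightarrow> complex fls fps" where
  "liftU f \<equiv> inclU t d (embL f)"

lemma Psi_iso_basis:
  assumes "Psi_iso t d (a, l0) (conn_to_cc A)"
  obtains p1 p2 where
    "lam * dsp p1 + a * p1 = fps_const J * (liftU (m11 A) * p1 + liftU (m21 A) * p2)"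
    "lam * dsp p2 + a * p2 = fps_const J * (liftU (m12 A) * p1 + liftU (m22 A) * p2)"
    "l0 = {fps_to_fls (f1 oo Z) * p1 $ 0 + fps_to_fls (f2 oo Z) * p2 $ 0 | f1 f2. True}"
proof -
  obtain p1 p2 where conn: "\<forall>s. tdelta a (inclU t d (fst s) * p1 + inclU t d (snd s) * p2)
      = dzdzt t d * (inclU t d (fst (nabla (mmap embL A) s)) * p1
                     + inclU t d (snd (nabla (mmap embL A) s)) * p2)"
    and lattice: "(\<lambda>v. inclL t d (fst v) * p1 $ 0 + inclL t d (snd v) * p2 $ 0)
      ` {(fps_to_fls f1, fps_to_fls f2) | f1 f2. True} = l0"
    using assms unfolding Psi_iso_def Let_def conn_to_cc_def fst_conv snd_conv by blast
  show thesis
  proof (rule that)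
    show "lam * dsp p1 + a * p1 = fps_const J * (liftU (m11 A) * p1 + liftU (m21 A) * p2)"
      using conn[rule_format, of "(1, 0)"] by (simp add: tdelta_def nabla_def dzdzt_eq)
    show "lam * dsp p2 + a * p2 = fps_const J * (liftU (m12 A) * p1 + liftU (m22 A) * p2)"
      using conn[rule_format, of "(0, 1)"] by (simp add: tdelta_def nabla_def dzdzt_eq)
    show "l0 = {fps_to_fls (f1 oo Z) * p1 $ 0 + fps_to_fls (f2 oo Z) * p2 $ 0 | f1 f2. True}"
      unfolding lattice[symmetric] by force
  qed
qed

lemma lattice_basis:
  assumes lattice: "{fps_to_fls (f1 oo Z) * P1 + fps_to_fls (f2 oo Z) * P2 | f1 f2. True}
      = {fps_to_fls f * c | f. True}"
    and c: "c \<noteq> 0"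
  obtains G1 G2 where "P1 = fps_to_fls G1 * c" "P2 = fps_to_fls G2 * c"
    and "fps_sigma_det G1 G2 $ 1 \<noteq> 0"
proof -
  have span: "\<exists>f1 f2. fps_to_fls (f1 oo Z) * P1 + fps_to_fls (f2 oo Z) * P2 = fps_to_fls g * c" for g
  proof -
    have "fps_to_fls g * c \<in> {fps_to_fls f * c | f. True}"
      by blast
    then show ?thesis
      unfolding lattice[symmetric] by force
  qed
  have "P1 = fps_to_fls (1 oo Z) * P1 + fps_to_fls (0 oo Z) * P2"
    and "P2 = fps_to_fls (0 oo Z) * P1 + fps_to_fls (1 oo Z) * P2"
    by simp_all
  then have "P1 \<in> {fps_to_fls f * c | f. True}" and "P2 \<in> {fps_to_fls f * c | f. True}"
    unfolding lattice[symmetric] by blast+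
  then obtain G1 G2 where G: "P1 = fps_to_fls G1 * c" "P2 = fps_to_fls G2 * c"
    by blast
  have span_G: "\<exists>f1 f2. (f1 oo Z) * G1 + (f2 oo Z) * G2 = g" for g
  proof -
    obtain f1 f2 where "fps_to_fls (f1 oo Z) * P1 + fps_to_fls (f2 oo Z) * P2 = fps_to_fls g * c"
      using span by blast
    then have "fps_to_fls ((f1 oo Z) * G1 + (f2 oo Z) * G2) * c = fps_to_fls g * c"
      by (simp add: G fls_times_fps_to_fls algebra_simps)
    then have "(f1 oo Z) * G1 + (f2 oo Z) * G2 = g"
      using c by (simp flip: fps_to_fls_plus)
    then show ?thesis
      by blast
  qed
  obtain f1 f2 f3 f4 where "(f1 oo Z) * G1 + (f2 oo Z) * G2 = 1"
    and "(f3 oo Z) * G1 + (f4 oo Z) * G2 = fps_X"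
    using span_G by metis
  then have "fps_sigma_det G1 G2 $ 1 \<noteq> 0"
    by (intro fps_sigma_det_basis) simp_all
  with G show thesis
    by (rule that)
qed

end

(* p1, p2 are the images of the standard basis of L under the isomorphism of Psi_iso,
   and c generates the lattice l0 *)
locale Psi_frame = simply_branched +
  fixes A :: "complex fps fps mat2" and a p1 p2 :: "complex fls fps"
    and c :: "complex fls" and G1 G2 :: "complex fps"
  assumes conn_p1: "lam * dsp p1 + a * p1 = fps_const J * (liftU (m11 A) * p1 + liftU (m21 A) * p2)"
    and conn_p2: "lam * dsp p2 + a * p2 = fps_const J * (liftU (m12 A) * p1 + liftU (m22 A) * p2)"
    and trace_A: "m11 A $ 0 + m22 A $ 0 = t"
    and a_0: "a $ 0 = mu t d"
    and c_nonzero: "c \<noteq> 0"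
    and p1_0: "p1 $ 0 = fps_to_fls G1 * c" and p2_0: "p2 $ 0 = fps_to_fls G2 * c"
    and sigma_det_G: "fps_sigma_det G1 G2 $ 1 \<noteq> 0"
begin

lemma sigma_det_p_0:
  "p1 $ 0 * sigma (p2 $ 0) - p2 $ 0 * sigma (p1 $ 0) = c * sigma c * fps_to_fls (fps_sigma_det G1 G2)"
  by (simp add: p1_0 p2_0 fps_sigma_det_def algebra_simps flip: fls_times_fps_to_fls)

lemma sigma_det_p_nonzero: "(p1 * sigmaU p2 - p2 * sigmaU p1) $ 0 \<noteq> 0"
  using sigma_det_G sigma_det_p_0 c_nonzero fps_sigma_det_0 by auto

lemma dsp_sigma_det_p:
  defines "W \<equiv> p1 * sigmaU p2 - p2 * sigmaU p1"
  shows "lam * dsp W = (fps_const J * (liftU (m11 A) + liftU (m22 A)) - a + sigmaU a) * W"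
proof -
  have "- (lam * dsp (sigmaU p1)) + sigmaU a * sigmaU p1
      = - fps_const J * (liftU (m11 A) * sigmaU p1 + liftU (m21 A) * sigmaU p2)"
    using arg_cong[where f=sigmaU, OF conn_p1] by (simp add: sigmaU_dsp)
  moreover have "- (lam * dsp (sigmaU p2)) + sigmaU a * sigmaU p2
      = - fps_const J * (liftU (m12 A) * sigmaU p1 + liftU (m22 A) * sigmaU p2)"
    using arg_cong[where f=sigmaU, OF conn_p2] by (simp add: sigmaU_dsp)
  ultimately show ?thesis
    using pair_det_equation[OF conn_p1 conn_p2] by (simp add: W_def diff_diff_eq)
qed

lemma higher_residues_vanish:
  assumes "n \<ge> 2"
  shows "a $ n $$ (-1) = 0"
proof -
  define W where "W = p1 * sigmaU p2 - p2 * sigmaU p1"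
  define M where "M = fps_const J * (liftU (m11 A) + liftU (m22 A)) - a + sigmaU a"
  have W0: "W $ 0 \<noteq> 0"
    using sigma_det_p_nonzero by (simp add: W_def)
  then have "M = M * W * inverse W"
    by (simp add: mult.assoc inverse_mult_eq_1')
  also have "\<dots> = lam * (dsp W * inverse W)"
    using dsp_sigma_det_p by (simp add: W_def M_def mult.assoc)
  finally have "M $ Suc (Suc m) = (dsp W * inverse W) $ Suc m" for m
    by simp
  then have "M $ Suc (Suc m) $$ (-1) = 0" for m
    using residue_dsp_logderiv[OF W0] by simp
  moreover obtain m where "n = Suc (Suc m)"
    using assms by (metis add_2_eq_Suc le_Suc_ex)
  moreover have "(J * (fps_to_fls (m11 A $ n oo Z) + fps_to_fls (m22 A $ n oo Z))) $$ (-1) = 0"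
    by (simp add: J_def flip: fls_times_fps_to_fls fps_to_fls_plus)
  ultimately show ?thesis
    by (simp add: M_def sigma_nth)
qed

lemma first_order_relation:
  "a $ 1 * (p1 $ 0 * sigma (p2 $ 0) - p2 $ 0 * sigma (p1 $ 0))
    = J * ((liftU (m11 A) $ 1 * p1 $ 0 + liftU (m21 A) $ 1 * p2 $ 0) * sigma (p2 $ 0)
           - (liftU (m12 A) $ 1 * p1 $ 0 + liftU (m22 A) $ 1 * p2 $ 0) * sigma (p1 $ 0))
      - (fls_deriv (p1 $ 0) * sigma (p2 $ 0) - fls_deriv (p2 $ 0) * sigma (p1 $ 0))"
proof (rule first_order_elimination)
  let ?x = "\<lambda>f. liftU f $ 0" and ?y = "\<lambda>f. liftU f $ 1"
  show "fls_deriv (p1 $ 0) + a $ 0 * p1 $ 1 + a $ 1 * p1 $ 0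
      = J * (?x (m11 A) * p1 $ 1 + ?y (m11 A) * p1 $ 0 + ?x (m21 A) * p2 $ 1 + ?y (m21 A) * p2 $ 0)"
    using arg_cong[where f="\<lambda>F. F $ 1", OF conn_p1] by (simp add: fps_mult_nth_1 algebra_simps)
  show "fls_deriv (p2 $ 0) + a $ 0 * p2 $ 1 + a $ 1 * p2 $ 0
      = J * (?x (m12 A) * p1 $ 1 + ?y (m12 A) * p1 $ 0 + ?x (m22 A) * p2 $ 1 + ?y (m22 A) * p2 $ 0)"
    using arg_cong[where f="\<lambda>F. F $ 1", OF conn_p2] by (simp add: fps_mult_nth_1 algebra_simps)
  show "sigma (a $ 0) * sigma (p1 $ 0) = - J * (?x (m11 A) * sigma (p1 $ 0) + ?x (m21 A) * sigma (p2 $ 0))"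
    using arg_cong[where f="\<lambda>F. sigma (F $ 0)", OF conn_p1] by simp
  show "sigma (a $ 0) * sigma (p2 $ 0) = - J * (?x (m12 A) * sigma (p1 $ 0) + ?x (m22 A) * sigma (p2 $ 0))"
    using arg_cong[where f="\<lambda>F. sigma (F $ 0)", OF conn_p2] by simp
  show "a $ 0 - sigma (a $ 0) = J * (?x (m11 A) + ?x (m22 A))"
    using trace_A by (simp add: a_0 mu_minus_sigma_mu flip: fps_to_fls_plus fps_compose_add_distrib)
qed

lemma first_coeff_simple_pole:
  defines "b1 \<equiv> a $ 1 + fls_deriv c / c"
  shows first_coeff_pole_order: "k < -1 \<Longrightarrow> b1 $$ k = 0"
    and first_coeff_residue: "b1 $$ (-1) = - 1 / 2"
proof -
  define B where "B = ((m11 A $ 1 oo Z) * G1 + (m21 A $ 1 oo Z) * G2) * (G2 oo - fps_X)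
    - ((m12 A $ 1 oo Z) * G1 + (m22 A $ 1 oo Z) * G2) * (G1 oo - fps_X)"
  define R where "R = fps_deriv G1 * (G2 oo - fps_X) - fps_deriv G2 * (G1 oo - fps_X)"
  define g1 g2 h1 h2 where G_defs: "g1 = fps_to_fls G1" "g2 = fps_to_fls G2"
    "h1 = fps_to_fls (G1 oo - fps_X)" "h2 = fps_to_fls (G2 oo - fps_X)"
  define y where "y f = fps_to_fls (f A $ 1 oo Z)" for f
  define Wl where "Wl = g1 * h2 - g2 * h1"
  define Bl where "Bl = (y m11 * g1 + y m21 * g2) * h2 - (y m12 * g1 + y m22 * g2) * h1"
  define Rl where "Rl = fls_deriv g1 * h2 - fls_deriv g2 * h1"
  have "a $ 1 * (c * sigma c * Wl) = c * sigma c * (J * Bl - Rl) - fls_deriv c * sigma c * Wl"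
    using first_order_relation
    by (simp add: p1_0 p2_0 Wl_def Bl_def Rl_def y_def G_defs algebra_simps)
  moreover have "c * (fls_deriv c / c) = fls_deriv c"
    using c_nonzero by simp
  ultimately have "c * sigma c * (b1 * Wl) = c * sigma c * (J * Bl - Rl)"
    unfolding b1_def by (simp add: algebra_simps)
  moreover have "Wl = fps_to_fls (fps_sigma_det G1 G2)"
    by (simp add: Wl_def G_defs fps_sigma_det_def flip: fls_times_fps_to_fls)
  moreover have "J * Bl - Rl = fps_to_fls (fps_deriv Z * B - R)"
    by (simp add: J_def Bl_def Rl_def B_def R_def y_def G_defs
        fls_deriv_fps_to_fls flip: fls_times_fps_to_fls fps_to_fls_minus fps_to_fls_plus)
  ultimately have "c * sigma c * (b1 * fps_to_fls (fps_sigma_det G1 G2))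
      = c * sigma c * fps_to_fls (fps_deriv Z * B - R)"
    by simp
  then have pole: "b1 * fps_to_fls (fps_sigma_det G1 G2) = fps_to_fls (fps_deriv Z * B - R)"
    using c_nonzero by simp
  show "k < -1 \<Longrightarrow> b1 $$ k = 0"
    by (rule fls_simple_pole_order[OF pole fps_sigma_det_0 sigma_det_G])
  have "(fps_deriv Z * B - R) $ 0 = - (R $ 0)"
    by (simp only: fps_sub_nth fps_mult_nth_0 deriv_zser_0 mult_zero_left diff_0)
  also have "\<dots> = - (fps_sigma_det G1 G2 $ 1 / 2)"
    unfolding fps_sigma_det_1 R_def by (simp add: field_simps)
  finally have "(fps_deriv Z * B - R) $ 0 = - (fps_sigma_det G1 G2 $ 1 / 2)" .
  then show "b1 $$ (-1) = - 1 / 2"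
    using sigma_det_G by (simp add: fls_simple_pole_residue[OF pole fps_sigma_det_0 sigma_det_G])
qed

end

lemma (in simply_branched) Psi_iso_frame:
  assumes conn: "is_Conn t d A" and tcc: "is_tCC t d a l0"
    and psi: "Psi_iso t d (a, l0) (conn_to_cc A)"
  obtains c p1 p2 G1 G2 where "Psi_frame t d A a p1 p2 c G1 G2"
    and "l0 = {fps_to_fls f * c | f. True}"
proof -
  obtain c where c: "c \<noteq> 0" and l0: "l0 = {fps_to_fls f * c | f. True}"
    using tcc by (auto simp: is_tCC_def lattice1_def)
  obtain p1 p2 where conn_p:
      "lam * dsp p1 + a * p1 = fps_const J * (liftU (m11 A) * p1 + liftU (m21 A) * p2)"
      "lam * dsp p2 + a * p2 = fps_const J * (liftU (m12 A) * p1 + liftU (m22 A) * p2)"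
    and lattice: "l0 = {fps_to_fls (f1 oo Z) * p1 $ 0 + fps_to_fls (f2 oo Z) * p2 $ 0 | f1 f2. True}"
    using psi by (rule Psi_iso_basis)
  obtain G1 G2 where "p1 $ 0 = fps_to_fls G1 * c" "p2 $ 0 = fps_to_fls G2 * c"
    and "fps_sigma_det G1 G2 $ 1 \<noteq> 0"
    by (rule lattice_basis[OF lattice[symmetric, unfolded l0] c])
  with conn_p c conn tcc have "Psi_frame t d A a p1 p2 c G1 G2"
    by unfold_locales (simp_all add: is_Conn_def is_tCC_def)
  then show thesis
    using l0 by (rule that)
qed

theorem proposition4p13:
  fixes t d :: "complex fps"
    and A :: "complex fps fps mat2"
    and a :: "complex fls fps"
    and l0 :: "complex fls set"
  assumes "(t\<^sup>2 - 4 * d) $ 0 = 0" and "(t\<^sup>2 - 4 * d) $ 1 \<noteq> 0"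
    and "is_Conn t d A"
    and "is_tCC t d a l0"
    and "Psi_iso t d (a, l0) (conn_to_cc A)"
  shows "\<exists>b. is_tConn t d b \<and> tCC_iso (tconn_to_tcc b) (a, l0)"
proof -
  (* fps_inv ignores the constant term *)
  interpret simply_branched t d
    using assms(2) by unfold_locales
  obtain c p1 p2 G1 G2 where frame: "Psi_frame t d A a p1 p2 c G1 G2"
    and l0: "l0 = {fps_to_fls f * c | f. True}"
    using Psi_iso_frame[OF assms(3-5)] .
  interpret Psi_frame t d A a p1 p2 c G1 G2
    by (fact frame)
  show ?thesis
    unfolding l0 using a_0 c_nonzero higher_residues_vanish first_coeff_pole_order first_coeff_residue
    by (rule exists_tConn_gauge_equivalent)
qed

end
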